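(* For all $v,w\in\mathfrak{H}^1$, \[ v\stackrel{t}{\ast}_\hbar w=(S_\hbar^t)^{-1}\bigl(S_\hbar^t(v)\ast_+S_\hbar^t(w)\bigr). \]
   Context: Let $\hbar,t$ be formal variables and $\mathfrak{H}=\mathbb{Q}[\hbar,t]\langle x,y\rangle$ the noncommutative polynomial algebra over $\mathbb{Q}[\hbar,t]$; put $\mathfrak{H}^1=\mathbb{Q}[\hbar,t]+\mathfrak{H}y$ and $z_j=x^{j-1}y$ ($j\ge1$). Let $\mathfrak z$ be the $\mathbb{Q}[\hbar,t]$-span of $\{z_j\}$ with bilinear product $z_i\circ_+ z_j=z_{i+j}+\hbar z_{i+j-1}$, extended to an action on $\mathfrak{H}^1$ by $z_i\circ_+1=0$, $z_i\circ_+(z_jw)=(z_i\circ_+z_j)w$. Let $S_\hbar^t:\mathfrak{H}^1\to\mathfrak{H}^1$ be the $\mathbb{Q}[\hbar,t]$-linear map with $S_\hbar^t(1)=1$ and $S_\hbar^t(z_kw)=z_kS_\hbar^t(w)+t\,z_k\circ_+S_\hbar^t(w)$ for words $w\in\mathfrak{H}^1$ (it is bijective). The product $\ast_+$ on $\mathfrak{H}^1$ is the $\mathbb{Q}[\hbar,t]$-bilinear product with $1\ast_+w=w\ast_+1=w$ and $z_iu\ast_+z_jv=z_i(u\ast_+z_jv)+z_j(z_iu\ast_+v)+(z_i\circ_+z_j)(u\ast_+v)$ for words $u,v,w$. The product $\stackrel{t}{\ast}_\hbar$ on $\mathfrak{H}^1$ is the $\mathbb{Q}[\hbar,t]$-bilinear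 product with $1\stackrel{t}{\ast}_\hbar w=w\stackrel{t}{\ast}_\hbar1=w$ and $z_iu\stackrel{t}{\ast}_\hbar z_jv=z_i(u\stackrel{t}{\ast}_\hbar z_jv)+z_j(z_iu\stackrel{t}{\ast}_\hbar v)+(1-2t)(z_i\circ_+z_j)(u\stackrel{t}{\ast}_\hbar v)+(t^2-t)\,z_i\circ_+z_j\circ_+(u\stackrel{t}{\ast}_\hbar v)$ for $i,j\ge1$ and words $u,v,w$ (here $z_i\circ_+z_j\circ_+X$ means $(z_i\circ_+z_j)\circ_+X$, and $(z_i\circ_+z_j)X$ denotes concatenation). *)

theory Defs
  imports "HOL-Computational_Algebra.Polynomial"
begin

text \<open>Coefficient ring Q[hbar,t] is rendered as rat poly poly: the outer variable is t,
  the inner variable is hbar.  A word z_{k1} ... z_{kn} of H^1 is the list [k1,...,kn]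
  (letters k >= 1).\<close>

type_synonym coef = "rat poly poly"
type_synonym hel = "nat list \<Rightarrow> coef"

definition hbar :: coef where "hbar = [: [:0, 1:] :]"
definition tvar :: coef where "tvar = [:0, 1:]"

definition supp :: "hel \<Rightarrow> nat list set" where
  "supp p = {u. p u \<noteq> 0}"

definition H1 :: "hel set" where
  "H1 = {p. finite (supp p) \<and> (\<forall>u \<in> supp p. \<forall>k \<in> set u. 1 \<le> k)}"

definition hzero :: hel where "hzero = (\<lambda>x. 0)"
definition hadd :: "hel \<Rightarrow> hel \<Rightarrow> hel" where "hadd p q = (\<lambda>x. p x + q x)"
definition hsc :: "coef \<Rightarrow> hel \<Rightarrow> hel" where "hsc c p = (\<lambda>x. c * p x)"

definition wd :: "nat list \<Rightarrow> hel" where "wd u = (\<lambda>x. if x = u then 1 else 0)"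

definition hcons :: "nat \<Rightarrow> hel \<Rightarrow> hel" where
  "hcons k p = (\<lambda>x. case x of [] \<Rightarrow> 0 | k' # x' \<Rightarrow> (if k' = k then p x' else 0))"

definition lin :: "(nat list \<Rightarrow> hel) \<Rightarrow> hel \<Rightarrow> hel" where
  "lin f p = (\<lambda>x. \<Sum>u\<in>supp p. p u * f u x)"

definition bilin :: "(nat list \<Rightarrow> nat list \<Rightarrow> hel) \<Rightarrow> hel \<Rightarrow> hel \<Rightarrow> hel" where
  "bilin f p q = (\<lambda>x. \<Sum>u\<in>supp p. \<Sum>v\<in>supp q. p u * q v * f u v x)"

fun circw :: "nat \<Rightarrow> nat list \<Rightarrow> hel" where
  "circw i [] = hzero"
| "circw i (j # w) = hadd (wd ((i + j) # w)) (hsc hbar (wd ((i + j - 1) # w)))"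

definition circ :: "nat \<Rightarrow> hel \<Rightarrow> hel" where
  "circ i p = lin (circw i) p"

text \<open>(z_i o_+ z_j) o_+ X = z_{i+j} o_+ X + hbar z_{i+j-1} o_+ X\<close>
definition circ2 :: "nat \<Rightarrow> nat \<Rightarrow> hel \<Rightarrow> hel" where
  "circ2 i j X = hadd (circ (i + j) X) (hsc hbar (circ (i + j - 1) X))"

text \<open>concatenation (z_i o_+ z_j) X\<close>
definition ccons2 :: "nat \<Rightarrow> nat \<Rightarrow> hel \<Rightarrow> hel" where
  "ccons2 i j X = hadd (hcons (i + j) X) (hsc hbar (hcons (i + j - 1) X))"

fun Sw :: "nat list \<Rightarrow> hel" where
  "Sw [] = wd []"
| "Sw (k # w) = hadd (hcons k (Sw w)) (hsc tvar (circ k (Sw w)))"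

definition S :: "hel \<Rightarrow> hel" where "S p = lin Sw p"

fun plusw :: "nat list \<Rightarrow> nat list \<Rightarrow> hel" where
  "plusw [] v = wd v"
| "plusw (i # u) [] = wd (i # u)"
| "plusw (i # u) (j # v) =
     hadd (hadd (hcons i (plusw u (j # v))) (hcons j (plusw (i # u) v)))
          (ccons2 i j (plusw u v))"

definition plusprod :: "hel \<Rightarrow> hel \<Rightarrow> hel" where
  "plusprod p q = bilin plusw p q"

fun tw :: "nat list \<Rightarrow> nat list \<Rightarrow> hel" where
  "tw [] v = wd v"
| "tw (i # u) [] = wd (i # u)"
| "tw (i # u) (j # v) =
     hadd (hadd (hcons i (tw u (j # v))) (hcons j (tw (i # u) v)))
          (hadd (hsc (1 - 2 * tvar) (ccons2 i j (tw u v)))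
                (hsc (tvar ^ 2 - tvar) (circ2 i j (tw u v))))"

definition tprod :: "hel \<Rightarrow> hel \<Rightarrow> hel" where
  "tprod p q = bilin tw p q"

end

theory Submission
  imports Defs "HOL-Library.Function_Algebras"
begin

text \<open>
  Since \<open>z_k o_+\<close> merges two letters into one, every word of \<open>S w\<close> other than \<open>w\<close>
  itself is strictly shorter than \<open>w\<close>. So \<open>S\<close> is unitriangular with respect to word
  length, hence injective on \<open>H^1\<close>, and it suffices to prove \<open>S (v * w) = S v *_+ S w\<close>.
  By bilinearity this is a statement about words, proved by induction along the recursion of
  \<open>*\<close>.

  Two families of identities drive the induction. First, \<open>S\<close> intertwines the left action:
  \<open>S (z_k W) = z_k S W + t z_k o_+ S W\<close> and \<open>S (z_k o_+ W) = z_k o_+ S W\<close>. Second, a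
  factor \<open>z_i o_+ U\<close> behaves in \<open>*_+\<close> like a leading letter whose contraction term
  is subtracted, e.g.
  \<open>(z_i o_+ U) *_+ z_j V = z_i o_+ (U *_+ z_j V) - (z_i o_+ z_j)(U *_+ V) + z_j ((z_i o_+ U) *_+ V)\<close>.
  Expanding \<open>S (z_i u) *_+ S (z_j v)\<close> with these identities, the contraction terms collect
  to \<open>(1 - 2t) (z_i o_+ z_j) X - t^2 z_i o_+ z_j o_+ X\<close> with \<open>X = S (u * v)\<close>, and this is
  \<open>S\<close> applied to the contraction terms of the recursion of \<open>*\<close>.
\<close>

section \<open>Finitely supported linear combinations of words\<close>

text \<open>Scalars act by multiplication with constant functions, so that the pointwise ring
  structure on \<open>hel\<close> from Function_Algebras gives ring normalisation for free.\<close>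

definition scalar :: "coef \<Rightarrow> hel" where "scalar c = (\<lambda>_. c)"

lemma scalar_apply [simp]: "scalar c x = c"
  by (simp add: scalar_def)

lemma hadd_eq_plus [simp]: "hadd p q = p + q"
  by (simp add: hadd_def fun_eq_iff)

lemma hzero_eq_zero [simp]: "hzero = 0"
  by (simp add: hzero_def fun_eq_iff)

lemma hsc_eq_scalar_mult [simp]: "hsc c p = scalar c * p"
  by (simp add: hsc_def fun_eq_iff)

lemma scalar_one: "scalar 1 = 1"
  and scalar_numeral: "scalar (numeral m) = numeral m"
  and scalar_diff: "scalar (a - b) = scalar a - scalar b"
  and scalar_mult: "scalar (a * b) = scalar a * scalar b"
  by (simp_all add: fun_eq_iff)

lemma scalar_power: "scalar (a ^ n) = scalar a ^ n"
proof -
  have "(scalar a ^ n) x = a ^ n" for x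
    by (induct n) simp_all
  then show ?thesis
    by (simp add: fun_eq_iff)
qed

lemmas scalar_ring_hom = scalar_one scalar_numeral scalar_diff scalar_mult scalar_power

lemma sum_fun_apply: "(\<Sum>a\<in>A. g a) x = (\<Sum>a\<in>A. g a x)"
  for g :: "'a \<Rightarrow> 'b \<Rightarrow> 'c::comm_monoid_add"
  by (induct A rule: infinite_finite_induct) auto

abbreviation finsupp :: "hel \<Rightarrow> bool" where "finsupp p \<equiv> finite (supp p)"

lemma in_supp_iff: "u \<in> supp p \<longleftrightarrow> p u \<noteq> 0"
  by (simp add: supp_def)

lemma supp_zero [simp]: "supp 0 = {}"
  by (simp add: supp_def)

lemma supp_wd [simp]: "supp (wd u) = {u}"
  by (auto simp: in_supp_iff wd_def split: if_splits)

lemma supp_hcons: "supp (hcons k p) = Cons k ` supp p"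
proof (rule set_eqI)
  show "x \<in> supp (hcons k p) \<longleftrightarrow> x \<in> Cons k ` supp p" for x
    by (cases x) (auto simp: in_supp_iff hcons_def)
qed

definition pos_word :: "nat list \<Rightarrow> bool" where
  "pos_word u \<longleftrightarrow> (\<forall>k\<in>set u. 1 \<le> k)"

lemma pos_word_simps [simp]: "pos_word []" "pos_word (k # u) \<longleftrightarrow> 1 \<le> k \<and> pos_word u"
  by (auto simp: pos_word_def)

lemma H1_iff: "p \<in> H1 \<longleftrightarrow> finsupp p \<and> (\<forall>u\<in>supp p. pos_word u)"
  by (auto simp: H1_def pos_word_def)

lemma H1_finsupp: "p \<in> H1 \<Longrightarrow> finsupp p"
  by (simp add: H1_iff)

lemma H1_supp_pos_word: "p \<in> H1 \<Longrightarrow> u \<in> supp p \<Longrightarrow> pos_word u"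
  by (simp add: H1_iff)

lemma H1_zero: "0 \<in> H1"
  by (simp add: H1_iff)

lemma H1_add: "p \<in> H1 \<Longrightarrow> q \<in> H1 \<Longrightarrow> p + q \<in> H1"
  by (auto simp: H1_iff in_supp_iff intro: finite_subset[of _ "supp p \<union> supp q"])

lemma H1_diff: "p \<in> H1 \<Longrightarrow> q \<in> H1 \<Longrightarrow> p - q \<in> H1"
  by (auto simp: H1_iff in_supp_iff intro: finite_subset[of _ "supp p \<union> supp q"])

lemma H1_scalar_mult: "p \<in> H1 \<Longrightarrow> scalar c * p \<in> H1"
  by (auto simp: H1_iff in_supp_iff intro: finite_subset[of _ "supp p"])

lemma H1_sum: "(\<And>a. a \<in> A \<Longrightarrow> g a \<in> H1) \<Longrightarrow> (\<Sum>a\<in>A. g a) \<in> H1"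
  by (induct A rule: infinite_finite_induct) (auto intro: H1_zero H1_add)

lemma H1_wd: "pos_word u \<Longrightarrow> wd u \<in> H1"
  by (simp add: H1_iff)

lemma H1_hcons: "1 \<le> k \<Longrightarrow> p \<in> H1 \<Longrightarrow> hcons k p \<in> H1"
  by (auto simp: H1_iff supp_hcons)

lemma lin_eq_sum: "lin f p = (\<Sum>u\<in>supp p. scalar (p u) * f u)"
  by (simp add: lin_def fun_eq_iff sum_fun_apply)

lemma H1_lin: "p \<in> H1 \<Longrightarrow> (\<And>u. u \<in> supp p \<Longrightarrow> f u \<in> H1) \<Longrightarrow> lin f p \<in> H1"
  unfolding lin_eq_sum by (intro H1_sum H1_scalar_mult)

lemma lin_on_superset:
  assumes "finite A" "supp p \<subseteq> A"
  shows "lin f p x = (\<Sum>u\<in>A. p u * f u x)"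
  unfolding lin_def by (rule sum.mono_neutral_left) (use assms in \<open>auto simp: in_supp_iff\<close>)

lemma lin_add:
  assumes "finsupp p" "finsupp q"
  shows "lin f (p + q) = lin f p + lin f q"
proof -
  have "supp (p + q) \<subseteq> supp p \<union> supp q"
    by (auto simp: in_supp_iff)
  with assms show ?thesis
    by (simp add: fun_eq_iff lin_on_superset[of "supp p \<union> supp q"] sum.distrib distrib_right)
qed

lemma lin_scalar_mult:
  assumes "finsupp p"
  shows "lin f (scalar c * p) = scalar c * lin f p"
proof -
  have "supp (scalar c * p) \<subseteq> supp p"
    by (auto simp: in_supp_iff)
  with assms show ?thesis
    by (simp add: fun_eq_iff lin_on_superset[of "supp p"] sum_distrib_left mult.assoc)
qed

lemma lin_add_fun: "lin (\<lambda>u. f u + g u) p = lin f p + lin g p"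
  by (simp add: lin_def fun_eq_iff sum.distrib distrib_left)

lemma lin_scalar_mult_fun: "lin (\<lambda>u. scalar c * f u) p = scalar c * lin f p"
  by (simp add: lin_def fun_eq_iff sum_distrib_left mult.left_commute)

lemma lin_zero [simp]: "lin f 0 = 0"
  by (simp add: lin_def fun_eq_iff supp_def)

lemma lin_wd [simp]: "lin f (wd u) = f u"
  unfolding lin_def supp_wd by (simp add: wd_def fun_eq_iff)

lemma lin_cong: "(\<And>u. u \<in> supp p \<Longrightarrow> f u = g u) \<Longrightarrow> lin f p = lin g p"
  by (simp add: lin_def fun_eq_iff)

lemma lin_wd_id: "finsupp p \<Longrightarrow> lin wd p = p"
  by (auto simp: lin_def wd_def fun_eq_iff in_supp_iff if_distrib cong: if_cong)

lemma lin_hcons: "lin f (hcons k p) = lin (\<lambda>x. f (k # x)) p"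
  unfolding lin_def supp_hcons fun_eq_iff
  by (subst sum.reindex) (auto simp: inj_on_def hcons_def)

lemma lin_wd_Cons: "finsupp p \<Longrightarrow> lin (\<lambda>x. wd (k # x)) p = hcons k p"
  using lin_hcons[of wd k p] by (simp add: lin_wd_id supp_hcons)

lemma hcons_add: "hcons k (p + q) = hcons k p + hcons k q"
  and hcons_diff: "hcons k (p - q) = hcons k p - hcons k q"
  and hcons_scalar_mult: "hcons k (scalar c * p) = scalar c * hcons k p"
  and hcons_zero [simp]: "hcons k 0 = 0"
  and hcons_wd [simp]: "hcons k (wd u) = wd (k # u)"
  by (auto simp: hcons_def wd_def fun_eq_iff split: list.split)

definition H1_linear :: "(hel \<Rightarrow> hel) \<Rightarrow> bool" where
  "H1_linear L \<longleftrightarrow> (\<forall>p\<in>H1. L p \<in> H1) \<and> (\<forall>p\<in>H1. \<forall>q\<in>H1. L (p + q) = L p + L q)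
     \<and> (\<forall>c. \<forall>p\<in>H1. L (scalar c * p) = scalar c * L p)"

lemma H1_linearI:
  assumes "\<And>p. p \<in> H1 \<Longrightarrow> L p \<in> H1"
    and "\<And>p q. p \<in> H1 \<Longrightarrow> q \<in> H1 \<Longrightarrow> L (p + q) = L p + L q"
    and "\<And>c p. p \<in> H1 \<Longrightarrow> L (scalar c * p) = scalar c * L p"
  shows "H1_linear L"
  using assms unfolding H1_linear_def by blast

lemma
  assumes "H1_linear L"
  shows H1_linear_H1: "p \<in> H1 \<Longrightarrow> L p \<in> H1"
    and H1_linear_add: "p \<in> H1 \<Longrightarrow> q \<in> H1 \<Longrightarrow> L (p + q) = L p + L q"
    and H1_linear_scalar_mult: "p \<in> H1 \<Longrightarrow> L (scalar c * p) = scalar c * L p"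
  using assms unfolding H1_linear_def by blast+

lemma H1_linear_zero: "H1_linear L \<Longrightarrow> L 0 = 0"
  using H1_linear_scalar_mult[of L 0 0] by (simp add: H1_zero fun_eq_iff)

lemma H1_linear_diff: "H1_linear L \<Longrightarrow> p \<in> H1 \<Longrightarrow> q \<in> H1 \<Longrightarrow> L (p - q) = L p - L q"
  using H1_linear_add[of L "p - q" q] by (simp add: H1_diff)

lemma H1_linear_sum:
  assumes "H1_linear L" "\<And>a. a \<in> A \<Longrightarrow> g a \<in> H1"
  shows "L (\<Sum>a\<in>A. g a) = (\<Sum>a\<in>A. L (g a))"
  using assms(2)
  by (induct A rule: infinite_finite_induct)
    (simp_all add: H1_linear_zero[OF assms(1)] H1_linear_add[OF assms(1)] H1_sum)

lemma H1_linear_lin: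
  assumes "H1_linear L" "\<And>u. u \<in> supp p \<Longrightarrow> f u \<in> H1"
  shows "L (lin f p) = lin (\<lambda>u. L (f u)) p"
  unfolding lin_eq_sum using assms(2)
  by (simp add: H1_linear_sum[OF assms(1)] H1_linear_scalar_mult[OF assms(1)] H1_scalar_mult)

lemma H1_linear_eq_on_words:
  assumes "H1_linear L" "H1_linear M" "\<And>u. pos_word u \<Longrightarrow> L (wd u) = M (wd u)" "p \<in> H1"
  shows "L p = M p"
proof -
  have words: "u \<in> supp p \<Longrightarrow> wd u \<in> H1" for u
    using assms(4) by (blast intro: H1_wd H1_supp_pos_word)
  have "L p = lin (\<lambda>u. L (wd u)) p"
    using H1_linear_lin[OF assms(1), of p wd] words assms(4) by (simp add: lin_wd_id H1_finsupp)
  also have "\<dots> = lin (\<lambda>u. M (wd u)) p"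
    using assms(3,4) by (blast intro: lin_cong H1_supp_pos_word)
  also have "\<dots> = M p"
    using H1_linear_lin[OF assms(2), of p wd] words assms(4) by (simp add: lin_wd_id H1_finsupp)
  finally show ?thesis .
qed

lemma H1_bilinear_eq_on_words:
  assumes "\<And>q. q \<in> H1 \<Longrightarrow> H1_linear (\<lambda>p. F p q)" "\<And>q. q \<in> H1 \<Longrightarrow> H1_linear (\<lambda>p. G p q)"
    and "\<And>u. pos_word u \<Longrightarrow> H1_linear (F (wd u))" "\<And>u. pos_word u \<Longrightarrow> H1_linear (G (wd u))"
    and "\<And>u v. pos_word u \<Longrightarrow> pos_word v \<Longrightarrow> F (wd u) (wd v) = G (wd u) (wd v)"
    and "p \<in> H1" "q \<in> H1"
  shows "F p q = G p q"
proof -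
  have "F (wd u) q = G (wd u) q" if "pos_word u" for u
    using H1_linear_eq_on_words[OF assms(3,4) assms(5) assms(7)] that by blast
  then show ?thesis
    using H1_linear_eq_on_words[OF assms(1,2)[OF assms(7)] _ assms(6)] by blast
qed

lemma bilin_eq_lin_lin: "bilin f p q = lin (\<lambda>u. lin (f u) q) p"
  by (simp add: bilin_def lin_def fun_eq_iff sum_distrib_left mult.assoc)

lemma bilin_wd [simp]: "bilin f (wd u) (wd v) = f u v"
  by (simp add: bilin_eq_lin_lin)

lemma H1_linear_bilin_left:
  assumes "\<And>u v. pos_word u \<Longrightarrow> pos_word v \<Longrightarrow> f u v \<in> H1" "q \<in> H1"
  shows "H1_linear (\<lambda>p. bilin f p q)"
  unfolding bilin_eq_lin_lin using assms
  by (intro H1_linearI) (auto simp: lin_add lin_scalar_mult H1_finsupp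
      intro!: H1_lin dest: H1_supp_pos_word)

lemma H1_linear_bilin_right:
  assumes "\<And>u v. pos_word u \<Longrightarrow> pos_word v \<Longrightarrow> f u v \<in> H1" "p \<in> H1"
  shows "H1_linear (\<lambda>q. bilin f p q)"
  unfolding bilin_eq_lin_lin using assms
  by (intro H1_linearI) (auto simp: lin_add lin_scalar_mult lin_add_fun lin_scalar_mult_fun
      H1_finsupp intro!: H1_lin dest: H1_supp_pos_word)

lemma H1_linear_id: "H1_linear (\<lambda>p. p)"
  by (rule H1_linearI) simp_all

lemmas H1_linearD = H1_linear_H1 H1_linear_add H1_linear_scalar_mult

lemma H1_linear_comp:
  assumes "H1_linear L" "H1_linear M"
  shows "H1_linear (\<lambda>p. L (M p))"
  by (rule H1_linearI) (simp_all add: H1_linearD[OF assms(1)] H1_linearD[OF assms(2)])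

lemma H1_linear_plus:
  assumes "H1_linear L" "H1_linear M"
  shows "H1_linear (\<lambda>p. L p + M p)"
  by (rule H1_linearI)
    (simp_all add: H1_linearD[OF assms(1)] H1_linearD[OF assms(2)] H1_add add_ac distrib_left)

lemma H1_linear_minus:
  assumes "H1_linear L" "H1_linear M"
  shows "H1_linear (\<lambda>p. L p - M p)"
  by (rule H1_linearI)
    (simp_all add: H1_linearD[OF assms(1)] H1_linearD[OF assms(2)] H1_diff add_diff_add
      right_diff_distrib)

lemma H1_linear_scalar_mult_fun:
  assumes "H1_linear L"
  shows "H1_linear (\<lambda>p. scalar c * L p)"
  by (rule H1_linearI)
    (simp_all add: H1_linearD[OF assms] H1_scalar_mult distrib_left mult.left_commute)

lemma H1_linear_hcons: "1 \<le> k \<Longrightarrow> H1_linear (hcons k)"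
  by (rule H1_linearI) (simp_all add: H1_hcons hcons_add hcons_scalar_mult)

lemma H1_linear_compose_hcons: "H1_linear L \<Longrightarrow> 1 \<le> k \<Longrightarrow> H1_linear (\<lambda>p. hcons k (L p))"
  using H1_linear_comp[OF H1_linear_hcons] .

section \<open>The action \<open>z_k o_+\<close> and the map \<open>S\<close>\<close>

lemma circ_wd [simp]: "circ i (wd u) = circw i u"
  by (simp add: circ_def)

lemma circ_zero [simp]: "circ i 0 = 0"
  by (simp add: circ_def)

lemma H1_circw: "1 \<le> i \<Longrightarrow> pos_word w \<Longrightarrow> circw i w \<in> H1"
  by (cases w) (auto intro!: H1_add H1_scalar_mult H1_wd H1_zero)

lemma H1_circ: "1 \<le> i \<Longrightarrow> p \<in> H1 \<Longrightarrow> circ i p \<in> H1"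
  unfolding circ_def by (intro H1_lin H1_circw) (blast intro: H1_supp_pos_word)+

lemma H1_linear_circ: "1 \<le> i \<Longrightarrow> H1_linear (circ i)"
  by (rule H1_linearI)
    (simp_all add: H1_circ, simp_all add: circ_def lin_add lin_scalar_mult H1_finsupp)

lemma H1_linear_compose_circ: "H1_linear L \<Longrightarrow> 1 \<le> i \<Longrightarrow> H1_linear (\<lambda>p. circ i (L p))"
  using H1_linear_comp[OF H1_linear_circ] .

lemmas H1_closed = H1_zero H1_add H1_diff H1_scalar_mult H1_wd H1_hcons H1_circ

lemmas circ_add = H1_linear_add[OF H1_linear_circ]
  and circ_diff = H1_linear_diff[OF H1_linear_circ]
  and circ_scalar_mult = H1_linear_scalar_mult[OF H1_linear_circ]

lemma circ_hcons: "finsupp p \<Longrightarrow> circ i (hcons j p) = ccons2 i j p"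
  by (simp add: circ_def ccons2_def lin_hcons lin_add_fun lin_scalar_mult_fun lin_wd_Cons)

lemma circ_circ:
  assumes "1 \<le> i" "1 \<le> j" "p \<in> H1"
  shows "circ i (circ j p) = circ2 i j p"
proof (rule H1_linear_eq_on_words[OF _ _ _ assms(3)])
  show "H1_linear (\<lambda>p. circ i (circ j p))"
    using assms by (intro H1_linear_compose_circ H1_linear_circ)
  show "H1_linear (circ2 i j)"
    unfolding circ2_def hsc_eq_scalar_mult hadd_eq_plus using assms
    by (intro H1_linear_plus H1_linear_scalar_mult_fun H1_linear_circ) simp_all
next
  fix u :: "nat list"
  assume u: "pos_word u"
  show "circ i (circ j (wd u)) = circ2 i j (wd u)"
  proof (cases u)
    case (Cons k x)
    \<comment> \<open>as successors the letters make the truncated differences \<open>i + j - 1\<close> normalise\<close>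
    with u assms obtain i0 j0 k0 where "i = Suc i0" "j = Suc j0" "k = Suc k0"
      by (metis One_nat_def Suc_le_D pos_word_simps(2))
    with Cons u show ?thesis
      by (simp add: circ2_def circ_add circ_scalar_mult H1_closed algebra_simps)
  qed (simp add: circ2_def)
qed

lemma circ_circw: "1 \<le> i \<Longrightarrow> 1 \<le> j \<Longrightarrow> pos_word u \<Longrightarrow> circ i (circw j u) = circ2 i j (wd u)"
  using circ_circ[of i j "wd u"] by (simp add: H1_wd)

lemma H1_ccons2: "1 \<le> i \<Longrightarrow> 1 \<le> j \<Longrightarrow> p \<in> H1 \<Longrightarrow> ccons2 i j p \<in> H1"
  by (simp add: ccons2_def H1_closed)

lemma H1_circ2: "1 \<le> i \<Longrightarrow> 1 \<le> j \<Longrightarrow> p \<in> H1 \<Longrightarrow> circ2 i j p \<in> H1"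
  by (simp add: circ2_def H1_closed)

lemma H1_linear_compose_ccons2:
  "H1_linear L \<Longrightarrow> 1 \<le> i \<Longrightarrow> 1 \<le> j \<Longrightarrow> H1_linear (\<lambda>p. ccons2 i j (L p))"
  unfolding ccons2_def hsc_eq_scalar_mult hadd_eq_plus
  by (intro H1_linear_plus H1_linear_scalar_mult_fun H1_linear_compose_hcons) simp_all

lemma H1_linear_compose_circ2:
  "H1_linear L \<Longrightarrow> 1 \<le> i \<Longrightarrow> 1 \<le> j \<Longrightarrow> H1_linear (\<lambda>p. circ2 i j (L p))"
  unfolding circ2_def hsc_eq_scalar_mult hadd_eq_plus
  by (intro H1_linear_plus H1_linear_scalar_mult_fun H1_linear_compose_circ) simp_all

lemma H1_Sw: "pos_word u \<Longrightarrow> Sw u \<in> H1"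
  by (induct u) (simp_all add: H1_closed)

lemma S_wd [simp]: "S (wd u) = Sw u"
  by (simp add: S_def)

lemma S_zero [simp]: "S 0 = 0"
  by (simp add: S_def)

lemma H1_linear_S: "H1_linear S"
  unfolding S_def
  by (rule H1_linearI)
    (simp_all add: lin_add lin_scalar_mult H1_finsupp H1_lin H1_Sw H1_supp_pos_word)

lemma H1_linear_compose_S: "H1_linear L \<Longrightarrow> H1_linear (\<lambda>p. S (L p))"
  using H1_linear_comp[OF H1_linear_S] .

lemmas S_add = H1_linear_add[OF H1_linear_S]
  and S_scalar_mult = H1_linear_scalar_mult[OF H1_linear_S]

lemma S_hcons:
  assumes "1 \<le> k" "p \<in> H1"
  shows "S (hcons k p) = hcons k (S p) + scalar tvar * circ k (S p)"
proof (rule H1_linear_eq_on_words[OF _ _ _ assms(2)])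
  show "H1_linear (\<lambda>p. S (hcons k p))"
    using assms by (intro H1_linear_compose_S H1_linear_hcons)
  show "H1_linear (\<lambda>p. hcons k (S p) + scalar tvar * circ k (S p))"
    using assms by (intro H1_linear_plus H1_linear_scalar_mult_fun H1_linear_compose_hcons
        H1_linear_compose_circ H1_linear_S)
qed simp

lemma S_circ:
  assumes "1 \<le> k" "p \<in> H1"
  shows "S (circ k p) = circ k (S p)"
proof (rule H1_linear_eq_on_words[OF _ _ _ assms(2)])
  show "H1_linear (\<lambda>p. S (circ k p))"
    using assms by (intro H1_linear_compose_S H1_linear_circ)
  show "H1_linear (\<lambda>p. circ k (S p))"
    using assms by (intro H1_linear_compose_circ H1_linear_S)
next
  fix u :: "nat list"
  assume u: "pos_word u"
  show "S (circ k (wd u)) = circ k (S (wd u))"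
  proof (cases u)
    case (Cons j x)
    with u have j: "1 \<le> j" and x: "pos_word x"
      by simp_all
    have "S (circ k (wd u)) = Sw ((k + j) # x) + scalar hbar * Sw ((k + j - 1) # x)"
      using Cons j x assms by (simp add: S_add S_scalar_mult H1_closed del: Sw.simps)
    also have "\<dots> = circ k (Sw u)"
      using Cons j x assms
      by (simp add: circ_add circ_scalar_mult circ_hcons circ_circ ccons2_def circ2_def
          H1_finsupp H1_closed H1_Sw algebra_simps)
    finally show ?thesis
      by simp
  qed simp
qed

lemma S_ccons2:
  assumes "1 \<le> i" "1 \<le> j" "p \<in> H1"
  shows "S (ccons2 i j p) = ccons2 i j (S p) + scalar tvar * circ2 i j (S p)"
  using assms H1_linear_H1[OF H1_linear_S]
  by (simp add: ccons2_def circ2_def S_add S_scalar_mult S_hcons H1_closed algebra_simps)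

lemma S_circ2:
  assumes "1 \<le> i" "1 \<le> j" "p \<in> H1"
  shows "S (circ2 i j p) = circ2 i j (S p)"
  using assms by (simp add: circ2_def S_add S_scalar_mult S_circ H1_closed)

lemma plusw_Nil_right [simp]: "plusw u [] = wd u"
  by (cases u) simp_all

lemma H1_plusw: "pos_word u \<Longrightarrow> pos_word v \<Longrightarrow> plusw u v \<in> H1"
  by (induct u v rule: plusw.induct) (simp_all add: H1_closed H1_ccons2)

lemma plusprod_wd [simp]: "plusprod (wd u) (wd v) = plusw u v"
  by (simp add: plusprod_def)

lemma H1_linear_plusprod_left: "q \<in> H1 \<Longrightarrow> H1_linear (\<lambda>p. plusprod p q)"
  unfolding plusprod_def using H1_plusw by (rule H1_linear_bilin_left)

lemma H1_linear_plusprod_right: "p \<in> H1 \<Longrightarrow> H1_linear (\<lambda>q. plusprod p q)"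
  unfolding plusprod_def using H1_plusw by (rule H1_linear_bilin_right)

lemma H1_plusprod: "p \<in> H1 \<Longrightarrow> q \<in> H1 \<Longrightarrow> plusprod p q \<in> H1"
  using H1_linear_H1[OF H1_linear_plusprod_left] .

lemma H1_linear_compose_plusprod_left:
  "H1_linear L \<Longrightarrow> q \<in> H1 \<Longrightarrow> H1_linear (\<lambda>p. plusprod (L p) q)"
  using H1_linear_comp[OF H1_linear_plusprod_left] .

lemma H1_linear_compose_plusprod_right:
  "H1_linear L \<Longrightarrow> p \<in> H1 \<Longrightarrow> H1_linear (\<lambda>q. plusprod p (L q))"
  using H1_linear_comp[OF H1_linear_plusprod_right] .

lemmas plusprod_add_left = H1_linear_add[OF H1_linear_plusprod_left]
  and plusprod_scalar_mult_left = H1_linear_scalar_mult[OF H1_linear_plusprod_left]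
  and plusprod_add_right = H1_linear_add[OF H1_linear_plusprod_right]
  and plusprod_scalar_mult_right = H1_linear_scalar_mult[OF H1_linear_plusprod_right]

lemma plusprod_zero [simp]: "plusprod 0 q = 0" "plusprod p 0 = 0"
  by (simp_all add: plusprod_def bilin_def fun_eq_iff)

lemma plusprod_unit_left:
  assumes "finsupp q"
  shows "plusprod (wd []) q = q"
proof -
  have "plusw [] = wd"
    by (simp add: fun_eq_iff)
  with assms show ?thesis
    by (simp add: plusprod_def bilin_eq_lin_lin lin_wd_id)
qed

lemma plusprod_unit_right: "finsupp p \<Longrightarrow> plusprod p (wd []) = p"
  by (simp add: plusprod_def bilin_eq_lin_lin lin_wd_id)

lemmas H1_linear_intros = H1_linear_id H1_linear_plus H1_linear_minus H1_linear_scalar_mult_fun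
  H1_linear_compose_hcons H1_linear_compose_circ H1_linear_compose_ccons2 H1_linear_compose_circ2
  H1_linear_compose_S H1_linear_compose_plusprod_left H1_linear_compose_plusprod_right

lemmas H1_closed_all = H1_closed H1_ccons2 H1_circ2 H1_plusprod H1_plusw H1_Sw H1_circw

lemma plusprod_hcons_hcons:
  assumes "1 \<le> i" "1 \<le> j" "p \<in> H1" "q \<in> H1"
  shows "plusprod (hcons i p) (hcons j q) =
    hcons i (plusprod p (hcons j q)) + hcons j (plusprod (hcons i p) q) + ccons2 i j (plusprod p q)"
proof (rule H1_bilinear_eq_on_words[OF _ _ _ _ _ assms(3,4)])
  show "plusprod (hcons i (wd u)) (hcons j (wd v)) =
    hcons i (plusprod (wd u) (hcons j (wd v))) + hcons j (plusprod (hcons i (wd u)) (wd v)) +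
    ccons2 i j (plusprod (wd u) (wd v))" for u v
    by simp
qed (use assms in \<open>(intro H1_linear_intros; simp add: H1_closed_all)+\<close>)

lemma plusprod_circ_hcons:
  assumes "1 \<le> i" "1 \<le> j" "p \<in> H1" "q \<in> H1"
  shows "plusprod (circ i p) (hcons j q) =
    circ i (plusprod p (hcons j q)) - ccons2 i j (plusprod p q) + hcons j (plusprod (circ i p) q)"
proof (rule H1_bilinear_eq_on_words[OF _ _ _ _ _ assms(3,4)])
  fix u v :: "nat list"
  assume u: "pos_word u" and v: "pos_word v"
  show "plusprod (circ i (wd u)) (hcons j (wd v)) =
    circ i (plusprod (wd u) (hcons j (wd v))) - ccons2 i j (plusprod (wd u) (wd v)) +
    hcons j (plusprod (circ i (wd u)) (wd v))"
  proof (cases u)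
    case (Cons k u')
    with u assms obtain i0 j0 k0 where "i = Suc i0" "j = Suc j0" "k = Suc k0"
      by (metis One_nat_def Suc_le_D pos_word_simps(2))
    with Cons u v show ?thesis
      by (simp add: plusprod_add_left plusprod_scalar_mult_left circ_add circ_scalar_mult circ_hcons
          hcons_add hcons_diff hcons_scalar_mult ccons2_def H1_finsupp H1_closed_all)
        (simp add: algebra_simps)
  qed (simp add: plusprod_unit_left ccons2_def)
qed (use assms in \<open>(intro H1_linear_intros; simp add: H1_closed_all)+\<close>)

lemma plusprod_hcons_circ:
  assumes "1 \<le> i" "1 \<le> j" "p \<in> H1" "q \<in> H1"
  shows "plusprod (hcons i p) (circ j q) =
    circ j (plusprod (hcons i p) q) - ccons2 i j (plusprod p q) + hcons i (plusprod p (circ j q))"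
proof (rule H1_bilinear_eq_on_words[OF _ _ _ _ _ assms(3,4)])
  fix u v :: "nat list"
  assume u: "pos_word u" and v: "pos_word v"
  obtain i0 j0 where ij: "i = Suc i0" "j = Suc j0"
    using assms by (metis One_nat_def Suc_le_D)
  show "plusprod (hcons i (wd u)) (circ j (wd v)) =
    circ j (plusprod (hcons i (wd u)) (wd v)) - ccons2 i j (plusprod (wd u) (wd v)) +
    hcons i (plusprod (wd u) (circ j (wd v)))"
  proof (cases v)
    case Nil
    with ij show ?thesis
      by (simp add: ccons2_def algebra_simps)
  next
    case (Cons l v')
    with v obtain l0 where "l = Suc l0"
      by (metis One_nat_def Suc_le_D pos_word_simps(2))
    with Cons u v ij show ?thesis
      by (simp add: plusprod_add_right plusprod_scalar_mult_right circ_add circ_scalar_mult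
          circ_hcons hcons_add hcons_diff hcons_scalar_mult ccons2_def H1_finsupp H1_closed_all)
        (simp add: algebra_simps)
  qed
qed (use assms in \<open>(intro H1_linear_intros; simp add: H1_closed_all)+\<close>)

lemma plusprod_circ_circ:
  assumes "1 \<le> i" "1 \<le> j" "p \<in> H1" "q \<in> H1"
  shows "plusprod (circ i p) (circ j q) =
    circ i (plusprod p (circ j q)) + circ j (plusprod (circ i p) q) - circ2 i j (plusprod p q)"
proof (rule H1_bilinear_eq_on_words[OF _ _ _ _ _ assms(3,4)])
  fix u v :: "nat list"
  assume u: "pos_word u" and v: "pos_word v"
  obtain i0 j0 where ij: "i = Suc i0" "j = Suc j0"
    using assms by (metis One_nat_def Suc_le_D)
  show "plusprod (circ i (wd u)) (circ j (wd v)) =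
    circ i (plusprod (wd u) (circ j (wd v))) + circ j (plusprod (circ i (wd u)) (wd v)) -
    circ2 i j (plusprod (wd u) (wd v))"
  proof (cases u)
    case Nil
    with assms v show ?thesis
      by (simp add: plusprod_unit_left H1_finsupp H1_circw circ_circw)
  next
    case (Cons k u')
    with u obtain k0 where k: "k = Suc k0"
      by (metis One_nat_def Suc_le_D pos_word_simps(2))
    show ?thesis
    proof (cases v)
      case Nil
      with assms u show ?thesis
        by (simp add: plusprod_unit_right H1_finsupp H1_circw circ_circw circ2_def add.commute)
    next
      case (Cons l v')
      with v obtain l0 where "l = Suc l0"
        by (metis One_nat_def Suc_le_D pos_word_simps(2))
      with Cons \<open>u = k # u'\<close> k u v ij show ?thesis
        by (simp add: plusprod_add_left plusprod_scalar_mult_left plusprod_add_right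
            plusprod_scalar_mult_right circ_add circ_diff circ_scalar_mult circ_hcons hcons_add
            hcons_diff hcons_scalar_mult ccons2_def circ2_def H1_finsupp H1_closed_all)
          (simp add: algebra_simps)
    qed
  qed
qed (use assms in \<open>(intro H1_linear_intros; simp add: H1_closed_all)+\<close>)

section \<open>\<open>S\<close> intertwines the two products\<close>

lemma H1_tw: "pos_word u \<Longrightarrow> pos_word v \<Longrightarrow> tw u v \<in> H1"
  by (induct u v rule: tw.induct) (simp_all add: H1_closed_all)

lemma S_tw: "pos_word u \<Longrightarrow> pos_word v \<Longrightarrow> S (tw u v) = plusprod (Sw u) (Sw v)"
proof (induct u v rule: tw.induct)
  case (1 v)
  then show ?case
    by (simp add: plusprod_unit_left H1_finsupp H1_Sw)
next
  case (2 i u)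
  then have "finsupp (Sw (i # u))"
    by (intro H1_finsupp H1_Sw)
  then show ?case
    by (simp add: plusprod_unit_right del: Sw.simps(2))
next
  case (3 i u j v)
  then have i: "1 \<le> i" and j: "1 \<le> j" and u: "pos_word u" and v: "pos_word v"
    by simp_all
  define A B C where "A = tw u (j # v)" and "B = tw (i # u) v" and "C = tw u v"
  have ABC: "A \<in> H1" "B \<in> H1" "C \<in> H1"
    using i j u v by (simp_all add: A_def B_def C_def H1_tw)
  have "S (tw (i # u) (j # v)) =
      hcons i (S A) + scalar tvar * circ i (S A) + (hcons j (S B) + scalar tvar * circ j (S B))
      + scalar (1 - 2 * tvar) * (ccons2 i j (S C) + scalar tvar * circ2 i j (S C))
      + scalar (tvar ^ 2 - tvar) * circ2 i j (S C)"
    unfolding tw.simps(3) A_def[symmetric] B_def[symmetric] C_def[symmetric] using i j ABC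
    by (simp add: S_add S_scalar_mult S_hcons S_circ S_ccons2 S_circ2 H1_closed_all)
  also have "\<dots> = plusprod (Sw (i # u)) (Sw (j # v))"
  proof -
    have IH: "S A = plusprod (Sw u) (Sw (j # v))" "S B = plusprod (Sw (i # u)) (Sw v)"
      "S C = plusprod (Sw u) (Sw v)"
      using 3(1-3) i j u v by (simp_all add: A_def B_def C_def del: Sw.simps)
    have "Sw u \<in> H1" "Sw v \<in> H1"
      using u v by (simp_all add: H1_Sw)
    with i j show ?thesis
      unfolding IH
      by (simp add: plusprod_add_left plusprod_scalar_mult_left plusprod_add_right
          plusprod_scalar_mult_right plusprod_hcons_hcons plusprod_circ_hcons plusprod_hcons_circ
          plusprod_circ_circ circ_add circ_diff circ_scalar_mult hcons_add hcons_diff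
          hcons_scalar_mult scalar_ring_hom H1_closed_all)
        (simp add: algebra_simps power2_eq_square)
  qed
  finally show ?case .
qed

lemma H1_linear_tprod_left: "q \<in> H1 \<Longrightarrow> H1_linear (\<lambda>p. tprod p q)"
  unfolding tprod_def using H1_tw by (rule H1_linear_bilin_left)

lemma H1_linear_tprod_right: "p \<in> H1 \<Longrightarrow> H1_linear (\<lambda>q. tprod p q)"
  unfolding tprod_def using H1_tw by (rule H1_linear_bilin_right)

lemma H1_tprod: "p \<in> H1 \<Longrightarrow> q \<in> H1 \<Longrightarrow> tprod p q \<in> H1"
  using H1_linear_H1[OF H1_linear_tprod_left] .

lemma S_tprod:
  assumes "p \<in> H1" "q \<in> H1"
  shows "S (tprod p q) = plusprod (S p) (S q)"
proof (rule H1_bilinear_eq_on_words[OF _ _ _ _ _ assms])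
  show "S (tprod (wd u) (wd v)) = plusprod (S (wd u)) (S (wd v))"
    if "pos_word u" "pos_word v" for u v
    using that by (simp add: tprod_def S_tw)
qed (use assms in \<open>(intro H1_linear_intros H1_linear_S H1_linear_tprod_left H1_linear_tprod_right;
      simp add: H1_closed_all H1_linear_H1[OF H1_linear_S])+\<close>)

section \<open>Injectivity of \<open>S\<close>\<close>

lemma circ_supp_length: "circ k p x \<noteq> 0 \<Longrightarrow> \<exists>u\<in>supp p. length u = length x"
proof -
  assume "circ k p x \<noteq> 0"
  then obtain u where "u \<in> supp p" "circw k u x \<noteq> 0"
    unfolding circ_def lin_def by (metis (no_types, lifting) mult_zero_right sum.neutral)
  moreover from this(2) have "length u = length x"
    by (cases u) (auto simp: wd_def split: if_splits)
  ultimately show ?thesis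
    by blast
qed

lemma Sw_supp_length: "Sw w x \<noteq> 0 \<Longrightarrow> length x \<le> length w"
proof (induct w arbitrary: x)
  case Nil
  then show ?case
    by (simp add: wd_def split: if_splits)
next
  case (Cons k w)
  then have "hcons k (Sw w) x \<noteq> 0 \<or> circ k (Sw w) x \<noteq> 0"
    by auto
  then show ?case
  proof
    assume "hcons k (Sw w) x \<noteq> 0"
    with Cons.hyps show ?thesis
      by (auto simp: hcons_def split: list.splits if_splits)
  next
    assume "circ k (Sw w) x \<noteq> 0"
    then obtain u where "Sw w u \<noteq> 0" "length u = length x"
      by (auto dest: circ_supp_length simp: in_supp_iff)
    with Cons.hyps show ?thesis
      by fastforce
  qed
qed

lemma Sw_same_length: "length x = length w \<Longrightarrow> Sw w x = (if x = w then 1 else 0)"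
proof (induct w arbitrary: x)
  case Nil
  then show ?case
    by (simp add: wd_def)
next
  case (Cons k w)
  have "circ k (Sw w) x = 0"
  proof (rule ccontr)
    assume "circ k (Sw w) x \<noteq> 0"
    then obtain u where "Sw w u \<noteq> 0" "length u = length x"
      by (auto dest: circ_supp_length simp: in_supp_iff)
    with Cons.prems show False
      by (auto dest: Sw_supp_length)
  qed
  moreover have "hcons k (Sw w) x = (if x = k # w then 1 else 0)"
    using Cons by (auto simp: hcons_def split: list.splits)
  ultimately show ?case
    by simp
qed

text \<open>A longest word in the support of \<open>p\<close> survives in \<open>S p\<close> with its coefficient
  unchanged.\<close>

lemma S_ne_zero:
  assumes "finsupp p" "p \<noteq> 0"
  shows "S p \<noteq> 0"
proof -
  have "supp p \<noteq> {}"
    using assms(2) by (auto simp: in_supp_iff fun_eq_iff)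
  then have "Max (length ` supp p) \<in> length ` supp p"
    using assms(1) by simp
  then obtain u where u: "u \<in> supp p" and "length u = Max (length ` supp p)"
    by (metis imageE)
  then have longest: "length w \<le> length u" if "w \<in> supp p" for w
    using assms(1) that by simp
  have "S p u = (\<Sum>w\<in>supp p. p w * Sw w u)"
    by (simp add: S_def lin_def)
  also have "\<dots> = (\<Sum>w\<in>supp p. if w = u then p w else 0)"
  proof (rule sum.cong)
    fix w
    assume w: "w \<in> supp p"
    show "p w * Sw w u = (if w = u then p w else 0)"
    proof (cases "length w = length u")
      case True
      then show ?thesis
        by (simp add: Sw_same_length)
    next
      case False
      with longest[OF w] have "Sw w u = 0"
        using Sw_supp_length[of w u] by linarith
      with False show ?thesis
        by auto
    qed
  qed simp
  also have "\<dots> = p u"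
    using u assms(1) by simp
  finally show ?thesis
    using u by (auto simp: in_supp_iff)
qed

lemma inj_on_S: "inj_on S H1"
proof (rule inj_onI)
  fix p q
  assume "p \<in> H1" "q \<in> H1" "S p = S q"
  then have "S (p - q) = 0"
    by (simp add: H1_linear_diff[OF H1_linear_S])
  with \<open>p \<in> H1\<close> \<open>q \<in> H1\<close> show "p = q"
    using S_ne_zero[of "p - q"] by (auto simp: H1_finsupp H1_diff)
qed

theorem proposition2p4:
  assumes "v \<in> H1" and "w \<in> H1"
  shows "tprod v w = inv_into H1 S (plusprod (S v) (S w))"
  using inv_into_f_f[OF inj_on_S H1_tprod[OF assms]] S_tprod[OF assms] by simp

end
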